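(* Let $X$ be a Banach space, $\mathcal F$ a filter of subsets of $\mathbb N$, and $(e_n)_{n=1}^\infty$ an $\mathcal F$-basis of $X$ with partial sum maps $(S_n)$. Suppose $(f_n)_{n=1}^\infty$ is a Schauder basis of $X$ with coordinate functionals $(f_n^\ast)$ and partial sum projections $T_n(x)=\sum_{k=1}^n f_k^\ast(x)f_k$, and that there is a set $\{n_1<n_2<\cdots\}\in\mathcal F$ such that each $S_{n_j}-T_{n_j}$ is a finite-rank operator admitting a support and $$\operatorname{supp}(S_{n_1}-T_{n_1})<\operatorname{supp}(S_{n_2}-T_{n_2})<\cdots.$$ Then $(e_n)$ is an $\mathcal F$-basis with individual brackets, i.e. for each $x\in X$ there is $A\in\mathcal F$ (depending on $x$) with $\lim_{\nu\to\infty,\ \nu\in A}\|S_\nu(x)-x\|=0$.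
   Context: A filter $\mathcal F$ of subsets of $\mathbb N$ is a nonempty family not containing $\emptyset$, closed under finite intersections and supersets. A sequence $(e_n)$ in a Banach space $X$ is an $\mathcal F$-basis if for each $x\in X$ there is a unique scalar sequence $(a_n)$ with $x=\mathcal F\text{-}\lim_n\sum_{k=1}^n a_ke_k$ in norm (for every $\varepsilon>0$ there is $A\in\mathcal F$ with $\|x-\sum_{k\le n}a_ke_k\|<\varepsilon$ for $n\in A$); $e_n^\ast(x)=a_n$, $S_n(x)=\sum_{k=1}^n e_k^\ast(x)e_k$. If $T\colon X\to X$ is a finite-rank operator that can be written as $T(x)=\sum_{j=1}^k f_{m_j}^\ast(x)x_j$ with nonzero $x_1,\dots,x_k\in X$ and $m_1<\dots<m_k$, then $\operatorname{supp}(T)=\{m_1,\dots,m_k\}$. For finite $A,B\subset\mathbb N$, $A<B$ means $\max A<\min B$. *)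

theory Defs
  imports "HOL-Analysis.Analysis"
begin

text \<open>Indices: the paper's \<open>\<nat> = {1,2,...}\<close> is rendered as the Isabelle type nat
  (starting at 0); this is only a relabelling.\<close>

definition is_set_filter :: "nat set set \<Rightarrow> bool" where
  "is_set_filter F \<longleftrightarrow> F \<noteq> {} \<and> {} \<notin> F \<and>
     (\<forall>A\<in>F. \<forall>B\<in>F. A \<inter> B \<in> F) \<and> (\<forall>A\<in>F. \<forall>B. A \<subseteq> B \<longrightarrow> B \<in> F)"

definition F_lim :: "nat set set \<Rightarrow> (nat \<Rightarrow> 'a::real_normed_vector) \<Rightarrow> 'a \<Rightarrow> bool" where
  "F_lim F s x \<longleftrightarrow> (\<forall>\<epsilon>>0. \<exists>A\<in>F. \<forall>n\<in>A. norm (x - s n) < \<epsilon>)"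

definition F_basis :: "nat set set \<Rightarrow> (nat \<Rightarrow> 'a::real_normed_vector) \<Rightarrow> bool" where
  "F_basis F e \<longleftrightarrow> (\<forall>x. \<exists>!a::nat \<Rightarrow> real. F_lim F (\<lambda>n. \<Sum>k\<le>n. a k *\<^sub>R e k) x)"

definition F_coord :: "nat set set \<Rightarrow> (nat \<Rightarrow> 'a::real_normed_vector) \<Rightarrow> nat \<Rightarrow> 'a \<Rightarrow> real" where
  "F_coord F e n x = (THE a::nat \<Rightarrow> real. F_lim F (\<lambda>m. \<Sum>k\<le>m. a k *\<^sub>R e k) x) n"

definition F_partial :: "nat set set \<Rightarrow> (nat \<Rightarrow> 'a::real_normed_vector) \<Rightarrow> nat \<Rightarrow> 'a \<Rightarrow> 'a" where
  "F_partial F e n x = (\<Sum>k\<le>n. F_coord F e k x *\<^sub>R e k)"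

definition schauder_basis :: "(nat \<Rightarrow> 'a::real_normed_vector) \<Rightarrow> bool" where
  "schauder_basis f \<longleftrightarrow> (\<forall>x. \<exists>!a::nat \<Rightarrow> real. (\<lambda>n. \<Sum>k\<le>n. a k *\<^sub>R f k) \<longlonglongrightarrow> x)"

definition schauder_coord :: "(nat \<Rightarrow> 'a::real_normed_vector) \<Rightarrow> nat \<Rightarrow> 'a \<Rightarrow> real" where
  "schauder_coord f n x = (THE a::nat \<Rightarrow> real. (\<lambda>m. \<Sum>k\<le>m. a k *\<^sub>R f k) \<longlonglongrightarrow> x) n"

definition schauder_partial :: "(nat \<Rightarrow> 'a::real_normed_vector) \<Rightarrow> nat \<Rightarrow> 'a \<Rightarrow> 'a" where
  "schauder_partial f n x = (\<Sum>k\<le>n. schauder_coord f k x *\<^sub>R f k)"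

definition is_support :: "(nat \<Rightarrow> 'a \<Rightarrow> real) \<Rightarrow> ('a \<Rightarrow> 'a::real_normed_vector) \<Rightarrow> nat set \<Rightarrow> bool" where
  "is_support fs T M \<longleftrightarrow> finite M \<and>
     (\<exists>y. (\<forall>m\<in>M. y m \<noteq> 0) \<and> (\<forall>x. T x = (\<Sum>m\<in>M. fs m x *\<^sub>R y m)))"

definition set_less :: "nat set \<Rightarrow> nat set \<Rightarrow> bool" where
  "set_less A B \<longleftrightarrow> (\<forall>a\<in>A. \<forall>b\<in>B. a < b)"

end

theory Submission
  imports Defs
begin

text \<open>
  Write \<open>D\<^sub>j = S\<^sub>n\<^sub>j - T\<^sub>n\<^sub>j\<close>; by hypothesis \<open>D\<^sub>j\<close> depends only on the coordinates of
  \<open>(f\<^sub>k)\<close> in a finite block \<open>M\<^sub>j\<close>, and \<open>M\<^sub>0 < M\<^sub>1 < \<dots>\<close>.  Fix \<open>x = \<Sum> a\<^sub>k f\<^sub>k\<close>.  Choose cuts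
  \<open>L\<^sub>0 \<le> L\<^sub>1 \<le> \<dots>\<close> that no block straddles and beyond which the tail of the expansion of \<open>x\<close>
  has norm at most \<open>4\<^sup>-\<^sup>r\<close>.  Weighting the \<open>k\<close>-th coefficient by \<open>1 + #{r. L\<^sub>r \<le> k}\<close> still gives
  a convergent series \<open>z\<close>, and on each block \<open>M\<^sub>j\<close> these weights are a common factor \<open>c\<^sub>j \<rightarrow> \<infinity>\<close>;
  hence \<open>D\<^sub>j z = c\<^sub>j D\<^sub>j x\<close>.  Since \<open>S\<^sub>\<nu> z \<rightarrow> z\<close> along \<open>\<F>\<close> and \<open>T\<^sub>n z \<rightarrow> z\<close>, the vectors \<open>D\<^sub>j z\<close> stay
  bounded for those \<open>j\<close> with \<open>n\<^sub>j\<close> in some \<open>B \<in> \<F>\<close>, so there \<open>D\<^sub>j x \<rightarrow> 0\<close> and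
  \<open>S\<^sub>n\<^sub>j x = T\<^sub>n\<^sub>j x + D\<^sub>j x \<rightarrow> x\<close>, which is convergence along \<open>A = B \<inter> {n\<^sub>0, n\<^sub>1, \<dots>} \<in> \<F>\<close>.
\<close>

lemma schauder_coord_eq:
  assumes "schauder_basis f" and "(\<lambda>N. \<Sum>k\<le>N. c k *\<^sub>R f k) \<longlonglongrightarrow> z"
  shows "schauder_coord f m z = c m"
proof -
  have "\<exists>!a::nat \<Rightarrow> real. (\<lambda>N. \<Sum>k\<le>N. a k *\<^sub>R f k) \<longlonglongrightarrow> z"
    using assms(1) unfolding schauder_basis_def by blast
  then have "(THE a::nat \<Rightarrow> real. (\<lambda>N. \<Sum>k\<le>N. a k *\<^sub>R f k) \<longlonglongrightarrow> z) = c"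
    using assms(2) by (intro the1_equality)
  then show ?thesis unfolding schauder_coord_def by simp
qed

lemma schauder_partial_tendsto:
  assumes "schauder_basis f"
  shows "(\<lambda>N. schauder_partial f N x) \<longlonglongrightarrow> x"
proof -
  have "\<exists>!a::nat \<Rightarrow> real. (\<lambda>N. \<Sum>k\<le>N. a k *\<^sub>R f k) \<longlonglongrightarrow> x"
    using assms unfolding schauder_basis_def by blast
  from theI'[OF this] show ?thesis
    unfolding schauder_partial_def schauder_coord_def .
qed

lemma F_partial_F_lim:
  assumes "F_basis F e"
  shows "F_lim F (\<lambda>N. F_partial F e N x) x"
proof -
  have "\<exists>!a::nat \<Rightarrow> real. F_lim F (\<lambda>N. \<Sum>k\<le>N. a k *\<^sub>R e k) x"
    using assms unfolding F_basis_def by blast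
  from theI'[OF this] show ?thesis
    unfolding F_partial_def F_coord_def .
qed

section \<open>Ordered blocks of indices\<close>

definition ordered_blocks :: "(nat \<Rightarrow> nat set) \<Rightarrow> bool" where
  "ordered_blocks M \<longleftrightarrow> (\<forall>j. finite (M j)) \<and> (\<forall>i j. i < j \<longrightarrow> set_less (M i) (M j))"

definition block_cut :: "(nat \<Rightarrow> nat set) \<Rightarrow> nat \<Rightarrow> bool" where
  "block_cut M L \<longleftrightarrow> (\<forall>j. (\<forall>m\<in>M j. m < L) \<or> (\<forall>m\<in>M j. L \<le> m))"

lemma ordered_blocks_less:
  assumes "ordered_blocks M" "i < j" "u \<in> M i" "v \<in> M j"
  shows "u < v"
  using assms unfolding ordered_blocks_def set_less_def by blast

text \<open>Cut points exist beyond every bound: if \<open>N\<close> itself is not a cut, then it is straddled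
  by a single block, and the successor of the maximum of that block is a cut.\<close>
lemma block_cuts_unbounded:
  assumes blocks: "ordered_blocks M"
  shows "\<exists>L\<ge>N. block_cut M L"
proof (cases "block_cut M N")
  case False
  then obtain j m where m: "m \<in> M j" "N \<le> m"
    unfolding block_cut_def by (auto simp: not_less)
  have fin: "finite (M j)" using blocks unfolding ordered_blocks_def by blast
  define L where "L = Suc (Max (M j))"
  have "block_cut M L"
    unfolding block_cut_def
  proof
    fix i
    consider "i < j" | "i = j" | "j < i" by linarith
    then show "(\<forall>m\<in>M i. m < L) \<or> (\<forall>m\<in>M i. L \<le> m)"
    proof cases
      case 1
      then show ?thesis using ordered_blocks_less[OF blocks 1 _ m(1)] Max_ge[OF fin m(1)]
        unfolding L_def by (meson less_Suc_eq_le order.strict_trans2 order.strict_implies_order)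
    next
      case 2
      then show ?thesis using fin unfolding L_def by (simp add: le_imp_less_Suc)
    next
      case 3
      have "Max (M j) \<in> M j" using fin m(1) by (intro Max_in) auto
      then show ?thesis using ordered_blocks_less[OF blocks 3] unfolding L_def
        by (simp add: Suc_leI)
    qed
  qed
  moreover have "N \<le> L" using m Max_ge[OF fin m(1)] unfolding L_def by simp
  ultimately show ?thesis by blast
qed blast

text \<open>Each index lies in at most one block, so eventually all blocks lie above any bound.\<close>
lemma blocks_eventually_above:
  assumes blocks: "ordered_blocks M"
  shows "eventually (\<lambda>j. \<forall>m\<in>M j. K \<le> m) sequentially"
proof (induction K)
  case (Suc K)
  have "eventually (\<lambda>j. K \<notin> M j) sequentially"
  proof (cases "\<exists>j0. K \<in> M j0")
    case True
    then obtain j0 where "K \<in> M j0" by blast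
    then have "\<forall>j>j0. K \<notin> M j" using ordered_blocks_less[OF blocks] by blast
    then show ?thesis unfolding eventually_sequentially by (meson Suc_le_eq)
  qed simp
  with Suc show ?case
    by eventually_elim (metis Suc_le_eq le_neq_implies_less)
qed simp

section \<open>Cut sequences and the weights they define\<close>

text \<open>Taking the least
  admissible index for each \<open>r\<close> makes the choice monotone.\<close>
lemma tail_cuts:
  fixes Q :: "nat \<Rightarrow> 'a::real_normed_vector" and b :: "nat \<Rightarrow> real"
  assumes lim: "Q \<longlonglongrightarrow> x" and pos: "\<And>r. 0 < b r" and dec: "decseq b"
    and unb: "\<And>N. \<exists>L\<ge>N. P L"
  shows "\<exists>L. mono L \<and> (\<forall>r. r \<le> L r \<and> P (L r) \<and> (\<forall>k\<ge>L r. norm (x - Q k) \<le> b r))"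
proof -
  define C where "C r L \<longleftrightarrow> r \<le> L \<and> P L \<and> (\<forall>k\<ge>L. norm (x - Q k) \<le> b r)" for r L
  have "\<exists>L. C r L" for r
  proof -
    obtain K where K: "\<forall>k\<ge>K. norm (Q k - x) < b r" using LIMSEQ_D[OF lim pos] by blast
    obtain L where "L \<ge> max K r" "P L" using unb by blast
    then show ?thesis using K unfolding C_def
      by (metis max.bounded_iff norm_minus_commute order.trans less_imp_le)
  qed
  define L where "L r = (LEAST L. C r L)" for r
  have CL: "C r (L r)" for r unfolding L_def by (rule LeastI_ex) fact
  have "L r \<le> L (Suc r)" for r
  proof -
    have "C r (L (Suc r))"
      using CL[of "Suc r"] decseqD[OF dec, of r "Suc r"] unfolding C_def by fastforce
    then show ?thesis unfolding L_def by (rule Least_le)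
  qed
  then have "mono L" by (rule incseq_SucI)
  then show ?thesis using CL unfolding C_def by blast
qed

text \<open>The counting function of a cut sequence: \<open>cut_count L m\<close> is the number of cuts
  \<open>L r\<close> with \<open>L r \<le> m\<close>.\<close>
definition cut_count :: "(nat \<Rightarrow> nat) \<Rightarrow> nat \<Rightarrow> nat" where
  "cut_count L m = (LEAST r. m < L r)"

lemma cut_count_less_iff:
  assumes mono: "mono L" and ge: "\<And>r. r \<le> L r"
  shows "r < cut_count L m \<longleftrightarrow> L r \<le> m"
proof
  assume "r < cut_count L m"
  then show "L r \<le> m" unfolding cut_count_def using not_less_Least by fastforce
next
  have ex: "m < L (Suc m)" using ge[of "Suc m"] by simp
  assume "L r \<le> m"
  moreover have "m < L (cut_count L m)" unfolding cut_count_def using ex by (rule LeastI)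
  ultimately show "r < cut_count L m" using monoD[OF mono, of "cut_count L m" r] by linarith
qed

lemma counting_tendsto:
  fixes \<rho> L :: "nat \<Rightarrow> nat"
  assumes count: "\<And>r m. r < \<rho> m \<longleftrightarrow> L r \<le> m"
  shows "filterlim \<rho> at_top sequentially"
proof -
  have "Z \<le> \<rho> m" if "L Z \<le> m" for Z m using count[of Z m] that by simp
  then show ?thesis unfolding filterlim_at_top eventually_sequentially by blast
qed

lemma counting_constant_on_block:
  fixes \<rho> L :: "nat \<Rightarrow> nat"
  assumes count: "\<And>r m. r < \<rho> m \<longleftrightarrow> L r \<le> m"
    and cuts: "\<And>r. block_cut M (L r)" and "m \<in> M j" "m' \<in> M j"
  shows "\<rho> m = \<rho> m'"
proof -
  have "L r \<le> m \<longleftrightarrow> L r \<le> m'" for r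
    using cuts[of r] assms(3,4) unfolding block_cut_def by (meson not_le)
  then have "r < \<rho> m \<longleftrightarrow> r < \<rho> m'" for r using count by simp
  then show ?thesis by (metis less_irrefl nat_neq_iff)
qed

text \<open>Exchanging the order of summation: weighting the \<open>k\<close>-th term by the number of cuts
  below \<open>k\<close> is the same as summing, over all cuts, the terms from that cut onwards.\<close>
lemma weighted_partial_sum:
  fixes v :: "nat \<Rightarrow> 'a::real_vector" and \<rho> L :: "nat \<Rightarrow> nat"
  assumes count: "\<And>r m. r < \<rho> m \<longleftrightarrow> L r \<le> m"
  shows "(\<Sum>k\<le>N. real (\<rho> k) *\<^sub>R v k) = (\<Sum>r<\<rho> N. \<Sum>k\<in>{L r..N}. v k)"
proof -
  have row: "(\<Sum>r<\<rho> N. if L r \<le> k then v k else 0) = real (\<rho> k) *\<^sub>R v k" if "k \<le> N" for k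
  proof -
    have "{..<\<rho> N} \<inter> {r. L r \<le> k} = {..<\<rho> k}"
      using that count by (auto intro: le_trans)
    then show ?thesis by (simp add: sum.If_cases sum_constant_scaleR)
  qed
  have col: "(\<Sum>k\<le>N. if L r \<le> k then v k else 0) = (\<Sum>k\<in>{L r..N}. v k)" for r
  proof -
    have "{..N} \<inter> {k. L r \<le> k} = {L r..N}" by auto
    then show ?thesis by (simp add: sum.If_cases)
  qed
  have "(\<Sum>k\<le>N. real (\<rho> k) *\<^sub>R v k) = (\<Sum>k\<le>N. \<Sum>r<\<rho> N. if L r \<le> k then v k else 0)"
    using row by simp
  also have "\<dots> = (\<Sum>r<\<rho> N. \<Sum>k\<le>N. if L r \<le> k then v k else 0)"
    by (rule sum.swap)
  finally show ?thesis using col by simp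
qed

text \<open>By \<open>weighted_partial_sum\<close>, the weighted partial sums are a sum of the (summable) tails at
  the cuts, minus an error term of size at most \<open>\<rho> * 4\<^sup>1\<^sup>-\<^sup>\<rho>\<close>, which vanishes.\<close>
lemma weighted_series_summable:
  fixes v :: "nat \<Rightarrow> 'a::banach" and \<rho> L :: "nat \<Rightarrow> nat"
  assumes count: "\<And>r m. r < \<rho> m \<longleftrightarrow> L r \<le> m"
    and tail: "\<And>r k. L r \<le> k \<Longrightarrow> norm (x - (\<Sum>i<k. v i)) \<le> (1/4)^r"
  shows "summable (\<lambda>k. real (\<rho> k) *\<^sub>R v k)"
proof -
  define Q where "Q k = (\<Sum>i<k. v i)" for k
  define u where "u r = x - Q (L r)" for r
  have u_summable: "summable u"
    by (rule summable_comparison_test'[OF summable_geometric[of "1/4::real"]])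
      (use tail in \<open>auto simp: u_def Q_def\<close>)
  have \<rho>_top: "filterlim \<rho> at_top sequentially" using counting_tendsto[OF count] .
  have split: "(\<Sum>k\<le>N. real (\<rho> k) *\<^sub>R v k)
      = (\<Sum>r<\<rho> N. u r) - real (\<rho> N) *\<^sub>R (x - Q (Suc N))" for N
  proof -
    have piece: "(\<Sum>k\<in>{L r..N}. v k) = u r - (x - Q (Suc N))" if "r < \<rho> N" for r
    proof -
      have "L r \<le> Suc N" using count that by simp
      then have "(\<Sum>k\<in>{L r..N}. v k) = Q (Suc N) - Q (L r)"
        unfolding Q_def using sum_diff_nat_ivl[of 0 "L r" "Suc N" v]
        by (simp add: atLeastLessThanSuc_atLeastAtMost lessThan_atLeast0)
      then show ?thesis by (simp add: u_def)
    qed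
    have "(\<Sum>k\<le>N. real (\<rho> k) *\<^sub>R v k) = (\<Sum>r<\<rho> N. \<Sum>k\<in>{L r..N}. v k)"
      by (rule weighted_partial_sum[OF count])
    also have "\<dots> = (\<Sum>r<\<rho> N. u r - (x - Q (Suc N)))"
      using piece by (intro sum.cong) auto
    also have "\<dots> = (\<Sum>r<\<rho> N. u r) - real (\<rho> N) *\<^sub>R (x - Q (Suc N))"
      by (simp only: sum_subtractf sum_constant_scaleR card_lessThan scaleR_diff_right)
    finally show ?thesis .
  qed
  have tails_lim: "(\<lambda>N. \<Sum>r<\<rho> N. u r) \<longlonglongrightarrow> suminf u"
    using filterlim_compose[OF summable_LIMSEQ[OF u_summable] \<rho>_top] .
  have error_bound: "norm (real (\<rho> N) *\<^sub>R (x - Q (Suc N))) \<le> 4 * (real (\<rho> N) * (1/4)^\<rho> N)" for N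
  proof (cases "\<rho> N")
    case (Suc r)
    then have "L r \<le> Suc N" using count[of r N] by simp
    then have "norm (x - Q (Suc N)) \<le> (1/4)^r" using tail unfolding Q_def by blast
    then show ?thesis using Suc by (simp add: mult_left_mono)
  qed simp
  have error_lim: "(\<lambda>N. real (\<rho> N) *\<^sub>R (x - Q (Suc N))) \<longlonglongrightarrow> 0"
  proof (rule Lim_null_comparison[OF always_eventually[OF allI[OF error_bound]]])
    have "(\<lambda>s. 4 * (real s * (1/4::real)^s)) \<longlonglongrightarrow> 0"
      using tendsto_mult_right_zero[OF powser_times_n_limit_0[of "1/4::real"]] by simp
    then show "(\<lambda>N. 4 * (real (\<rho> N) * (1/4)^\<rho> N)) \<longlonglongrightarrow> 0"
      using filterlim_compose[OF _ \<rho>_top] by blast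
  qed
  have "(\<lambda>N. \<Sum>k\<le>N. real (\<rho> k) *\<^sub>R v k) \<longlonglongrightarrow> suminf u - 0"
    unfolding split by (intro tendsto_diff tails_lim error_lim)
  then show ?thesis unfolding summable_def sums_def_le by blast
qed

section \<open>Amplifying coordinates blockwise\<close>

text \<open>The factor of the \<open>k\<close>-th coordinate is \<open>1\<close> plus the number
  of cuts below \<open>k\<close>, for cuts that are cut points of the blocks and beyond which the
  expansion of \<open>x\<close> has tail at most \<open>4\<^sup>-\<^sup>r\<close>.\<close>
lemma block_amplification:
  fixes f :: "nat \<Rightarrow> 'a::banach"
  assumes basis: "schauder_basis f" and blocks: "ordered_blocks M"
  shows "\<exists>z c. filterlim c at_top sequentially \<and>
           (\<forall>j. \<forall>m\<in>M j. schauder_coord f m z = c j * schauder_coord f m x)"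
proof -
  define v where "v k = schauder_coord f k x *\<^sub>R f k" for k
  have v_sums: "v sums x"
    using schauder_partial_tendsto[OF basis, of x]
    unfolding sums_def_le schauder_partial_def v_def .
  obtain L where L_mono: "mono L" and L_ge: "\<And>r. r \<le> L r" and L_cut: "\<And>r. block_cut M (L r)"
    and L_tail: "\<And>r k. L r \<le> k \<Longrightarrow> norm (x - (\<Sum>i<k. v i)) \<le> (1/4)^r"
    using tail_cuts[OF v_sums[unfolded sums_def], of "\<lambda>r. (1/4)^r" "block_cut M"]
      block_cuts_unbounded[OF blocks] by (auto simp: decseq_def power_decreasing)
  define \<rho> where "\<rho> = cut_count L"
  have count: "\<And>r m. r < \<rho> m \<longleftrightarrow> L r \<le> m"
    unfolding \<rho>_def using cut_count_less_iff[OF L_mono L_ge] .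
  have "summable (\<lambda>k. v k + real (\<rho> k) *\<^sub>R v k)"
    using summable_add[OF sums_summable[OF v_sums] weighted_series_summable[OF count L_tail]] .
  then obtain z where "(\<lambda>k. (1 + real (\<rho> k)) *\<^sub>R v k) sums z"
    by (auto simp: summable_def scaleR_add_left)
  then have z_coord: "schauder_coord f k z = (1 + real (\<rho> k)) * schauder_coord f k x" for k
    by (intro schauder_coord_eq[OF basis]) (simp add: sums_def_le v_def)
  have fin: "\<And>j. finite (M j)" using blocks unfolding ordered_blocks_def by blast
  define h where "h j = (if M j = {} then j else Min (M j))" for j
  define c where "c j = 1 + real (\<rho> (h j))" for j
  have "\<rho> m = \<rho> (h j)" if "m \<in> M j" for j m
  proof -
    have "h j \<in> M j" using that fin unfolding h_def by (auto intro: Min_in)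
    then show ?thesis using counting_constant_on_block[OF count L_cut that] by blast
  qed
  then have coords: "\<forall>j. \<forall>m\<in>M j. schauder_coord f m z = c j * schauder_coord f m x"
    by (simp add: z_coord c_def)
  have "filterlim h at_top sequentially"
    unfolding filterlim_at_top
  proof
    fix K
    show "eventually (\<lambda>j. K \<le> h j) sequentially"
      using blocks_eventually_above[OF blocks, of K] eventually_ge_at_top[of K]
      by eventually_elim (use fin in \<open>auto simp: h_def intro: Min_in\<close>)
  qed
  then have "filterlim c at_top sequentially"
    unfolding c_def
    by (intro filterlim_tendsto_add_at_top[OF tendsto_const]
        filterlim_compose[OF filterlim_real_sequentially]
        filterlim_compose[OF counting_tendsto[OF count]])
  with coords show ?thesis by blast
qed

lemma support_scale:
  assumes "is_support fs T M" and "\<forall>m\<in>M. fs m z = c * fs m x"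
  shows "T z = c *\<^sub>R T x"
proof -
  obtain y where T: "\<And>w. T w = (\<Sum>m\<in>M. fs m w *\<^sub>R y m)"
    using assms(1) unfolding is_support_def by blast
  show ?thesis
    unfolding T scaleR_sum_right using assms(2) by (intro sum.cong) auto
qed

lemma scaled_bounded_tendsto_zero:
  fixes u :: "'b \<Rightarrow> 'a::real_normed_vector" and c :: "'b \<Rightarrow> real"
  assumes c: "filterlim c at_top G" and bounded: "eventually (\<lambda>j. norm (c j *\<^sub>R u j) \<le> K) G"
  shows "(u \<longlongrightarrow> 0) G"
proof (rule Lim_null_comparison)
  show "eventually (\<lambda>j. norm (u j) \<le> K / c j) G"
    using bounded c[unfolded filterlim_at_top_dense, rule_format, of 0]
    by eventually_elim (simp add: field_simps)
  show "((\<lambda>j. K / c j) \<longlongrightarrow> 0) G"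
    using tendsto_divide_0[OF tendsto_const filterlim_at_top_imp_at_infinity[OF c]] .
qed

lemma F_brackets_from_subsequence:
  fixes S :: "nat \<Rightarrow> 'a::real_normed_vector"
  assumes F: "is_set_filter F" and n: "strict_mono n" "range n \<in> F" and B: "B \<in> F"
    and lim: "((\<lambda>j. S (n j)) \<longlongrightarrow> x) (inf sequentially (principal {j. n j \<in> B}))"
  shows "\<exists>A\<in>F. \<forall>\<epsilon>>0. \<exists>N. \<forall>\<nu>\<in>A. \<nu> \<ge> N \<longrightarrow> norm (S \<nu> - x) < \<epsilon>"
proof (intro bexI allI impI)
  show "B \<inter> range n \<in> F" using F n(2) B unfolding is_set_filter_def by blast
  fix \<epsilon> :: real assume "\<epsilon> > 0"
  then obtain J where J: "\<And>j. J \<le> j \<Longrightarrow> n j \<in> B \<Longrightarrow> norm (S (n j) - x) < \<epsilon>"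
    using tendstoD[OF lim]
    by (auto simp: eventually_inf_principal eventually_sequentially dist_norm)
  have "norm (S \<nu> - x) < \<epsilon>" if "\<nu> \<in> B \<inter> range n" "n J \<le> \<nu>" for \<nu>
    using that J strict_mono_less_eq[OF n(1)] by auto
  then show "\<exists>N. \<forall>\<nu>\<in>B \<inter> range n. N \<le> \<nu> \<longrightarrow> norm (S \<nu> - x) < \<epsilon>" by blast
qed

theorem theorem3p2:
  fixes F :: "nat set set" and e f :: "nat \<Rightarrow> 'a::banach" and n :: "nat \<Rightarrow> nat"
  assumes "is_set_filter F"
    and "F_basis F e"
    and "schauder_basis f"
    and "strict_mono n" and "range n \<in> F"
    and "\<forall>j. \<exists>M. is_support (schauder_coord f)
              (\<lambda>x. F_partial F e (n j) x - schauder_partial f (n j) x) M"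
    and "\<forall>i j M M'. i < j \<longrightarrow>
           is_support (schauder_coord f) (\<lambda>x. F_partial F e (n i) x - schauder_partial f (n i) x) M \<longrightarrow>
           is_support (schauder_coord f) (\<lambda>x. F_partial F e (n j) x - schauder_partial f (n j) x) M' \<longrightarrow>
           set_less M M'"
  shows "\<forall>x. \<exists>A\<in>F. \<forall>\<epsilon>>0. \<exists>N. \<forall>\<nu>\<in>A. \<nu> \<ge> N \<longrightarrow> norm (F_partial F e \<nu> x - x) < \<epsilon>"
proof
  fix x :: 'a
  define D where "D j w = F_partial F e (n j) w - schauder_partial f (n j) w" for j w
  have "\<forall>j. \<exists>M. is_support (schauder_coord f) (D j) M"
    using assms(6) unfolding D_def .
  then obtain M where M: "\<And>j. is_support (schauder_coord f) (D j) (M j)"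
    by (rule choice[THEN exE]) blast
  have "ordered_blocks M"
    unfolding ordered_blocks_def
  proof (intro conjI allI impI)
    show "finite (M j)" for j using M[of j] unfolding is_support_def by blast
    show "set_less (M i) (M j)" if "i < j" for i j
      using assms(7)[rule_format, OF that M[of i, unfolded D_def] M[of j, unfolded D_def]] .
  qed
  then obtain z c where c: "filterlim c at_top sequentially"
    and coords: "\<forall>j. \<forall>m\<in>M j. schauder_coord f m z = c j * schauder_coord f m x"
    using block_amplification[OF assms(3)] by blast
  have Dz: "D j z = c j *\<^sub>R D j x" for j
    using coords by (intro support_scale[OF M]) blast
  obtain B where B: "B \<in> F" "\<forall>\<nu>\<in>B. norm (z - F_partial F e \<nu> z) < 1/2"
    using F_partial_F_lim[OF assms(2), of z, unfolded F_lim_def, rule_format, of "1/2"] by auto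
  define G where "G = inf sequentially (principal {j. n j \<in> B})"
  have T: "((\<lambda>j. schauder_partial f (n j) w) \<longlongrightarrow> w) G" for w
    using LIMSEQ_subseq_LIMSEQ[OF schauder_partial_tendsto[OF assms(3)] assms(4)]
    unfolding G_def o_def by (rule tendsto_mono[rotated]) simp
  have "eventually (\<lambda>j. norm (D j z) \<le> 1) G"
  proof -
    have "eventually (\<lambda>j. n j \<in> B) G"
      unfolding G_def eventually_inf_principal by simp
    moreover have "eventually (\<lambda>j. norm (schauder_partial f (n j) z - z) < 1/2) G"
      using tendstoD[OF T[of z], of "1/2"] by (simp add: dist_norm)
    ultimately show ?thesis
    proof eventually_elim
      case (elim j)
      have "D j z = (F_partial F e (n j) z - z) + (z - schauder_partial f (n j) z)"
        unfolding D_def by simp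
      then have "norm (D j z) \<le> norm (z - F_partial F e (n j) z) + norm (schauder_partial f (n j) z - z)"
        by (metis norm_minus_commute norm_triangle_ineq)
      then show ?case using elim B(2) by fastforce
    qed
  qed
  then have "((\<lambda>j. D j x) \<longlongrightarrow> 0) G"
    unfolding Dz G_def
    by (rule scaled_bounded_tendsto_zero[OF filterlim_mono[OF c order_refl inf_le1]])
  from tendsto_add[OF this T[of x]] have "((\<lambda>j. F_partial F e (n j) x) \<longlongrightarrow> x) G"
    by (simp add: D_def)
  then show "\<exists>A\<in>F. \<forall>\<epsilon>>0. \<exists>N. \<forall>\<nu>\<in>A. \<nu> \<ge> N \<longrightarrow> norm (F_partial F e \<nu> x - x) < \<epsilon>"
    using F_brackets_from_subsequence[OF assms(1,4,5) B(1), of "\<lambda>\<nu>. F_partial F e \<nu> x"]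
    unfolding G_def by blast
qed

end
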